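(* Let $N\ge1$, $p\ge2$, $w,g\in L^1_{loc}(\mathbb{R}^N)$ positive a.e. with $g^{-1}\in L^\infty(\mathbb{R}^N)$. Let $0<\delta<\gamma$ with $(\delta,p)$ in the class $P_a$. Let $u\in C^1(\mathbb{R}^N)$ with $0<u\le1$ in $\mathbb{R}^N$ be a stable weak solution of $\operatorname{div}(w|\nabla u|^{p-2}\nabla u)=g(x)(u^{-\delta}+u^{-\gamma})$ in $\mathbb{R}^N$. Then for every $\beta\in(0,s_p)$ there exists a constant $c>0$, depending on $\beta,p,\delta,m$ but not on $\psi$, such that for every $\psi\in C^1_c(\mathbb{R}^N)$ with $0\le\psi\le1$, $$\int_{\mathbb{R}^N} g\Big(\frac{\psi}{u}\Big)^{2\beta+p-1+\delta}dx\le c\int_{\mathbb{R}^N} w^{\theta_a'}|\nabla\psi|^{p\theta_a'}dx,\qquad \theta_a'=\frac{2\beta+p-1+\delta}{p-1+\delta}.$$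
   Context: Here $m=\|g^{-1}\|_{L^\infty}$. Weak solution and stability are with respect to $f(t)=-t^{-\delta}-t^{-\gamma}$ and the equation $-\operatorname{div}(w|\nabla u|^{p-2}\nabla u)=gf(u)$: $u\in C^1$ is a weak solution if $\int w|\nabla u|^{p-2}\nabla u\cdot\nabla\varphi=\int gf(u)\varphi$ for all $\varphi\in C^1_c(\mathbb{R}^N)$; it is stable if for all $\varphi\in C^1_c(\mathbb{R}^N)$, $\int w|\nabla u|^{p-2}|\nabla\varphi|^2+(p-2)\int w|\nabla u|^{p-4}(\nabla u\cdot\nabla\varphi)^2-\int gf'(u)\varphi^2\ge0$ (middle integrand $=0$ where $\nabla u=0$). Class $P_a$: $(\delta,p)\in P_a$ if either $2\le p<3$ and $\delta\ge1$, or $p=3$ and $\delta>1$, or $p>3$ and $\delta>\frac{(p-1)^2}{4}$. $s_p=\delta+\sqrt{\delta^2+\delta}$ if $p=2$, $s_p=\frac{2\delta}{p-1}-\frac{p-1}{2}$ if $p>2$. *)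

theory Defs
  imports "HOL-Analysis.Analysis" "HOL-Probability.Essential_Supremum"
begin

definition C1_with_grad :: "(real^'n \<Rightarrow> real) \<Rightarrow> (real^'n \<Rightarrow> real^'n) \<Rightarrow> bool" where
  "C1_with_grad f Df \<longleftrightarrow>
     (\<forall>x. (f has_derivative (\<lambda>h. Df x \<bullet> h)) (at x)) \<and> continuous_on UNIV Df"

definition compact_support :: "(real^'n \<Rightarrow> real) \<Rightarrow> bool" where
  "compact_support f \<longleftrightarrow> compact (closure {x. f x \<noteq> 0})"

definition locally_integrable :: "(real^'n \<Rightarrow> real) \<Rightarrow> bool" where
  "locally_integrable f \<longleftrightarrow> (\<forall>K. compact K \<longrightarrow> set_integrable lborel K f)"

text \<open>Power with the convention t^0 = 1 also for t = 0 (used for |grad u|^(p-2)).\<close>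
definition pw :: "real \<Rightarrow> real \<Rightarrow> real" where
  "pw t a = (if a = 0 then 1 else t powr a)"

definition class_Pa :: "real \<Rightarrow> real \<Rightarrow> bool" where
  "class_Pa \<delta> p \<longleftrightarrow> (2 \<le> p \<and> p < 3 \<and> \<delta> \<ge> 1) \<or> (p = 3 \<and> \<delta> > 1) \<or> (p > 3 \<and> \<delta> > (p - 1)^2 / 4)"

definition s_p :: "real \<Rightarrow> real \<Rightarrow> real" where
  "s_p p \<delta> = (if p = 2 then \<delta> + sqrt (\<delta>^2 + \<delta>) else 2 * \<delta> / (p - 1) - (p - 1) / 2)"

definition theta_a' :: "real \<Rightarrow> real \<Rightarrow> real \<Rightarrow> real" where
  "theta_a' \<beta> p \<delta> = (2 * \<beta> + p - 1 + \<delta>) / (p - 1 + \<delta>)"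

text \<open>Weak solution of -div(w|grad u|^(p-2) grad u) = g f(u), f(t) = -t^(-delta) - t^(-gamma).\<close>
definition weak_solution ::
  "real \<Rightarrow> real \<Rightarrow> real \<Rightarrow> (real^'n \<Rightarrow> real) \<Rightarrow> (real^'n \<Rightarrow> real) \<Rightarrow> (real^'n \<Rightarrow> real) \<Rightarrow> (real^'n \<Rightarrow> real^'n) \<Rightarrow> bool" where
  "weak_solution p \<delta> \<gamma> w g u Du \<longleftrightarrow>
     (\<forall>\<phi> D\<phi>. C1_with_grad \<phi> D\<phi> \<and> compact_support \<phi> \<longrightarrow>
        (\<integral>x. w x * pw (norm (Du x)) (p - 2) * (Du x \<bullet> D\<phi> x) \<partial>lborel)
        = (\<integral>x. g x * (- (u x powr (-\<delta>)) - u x powr (-\<gamma>)) * \<phi> x \<partial>lborel))"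

text \<open>Stability; f'(t) = delta t^(-delta-1) + gamma t^(-gamma-1); middle integrand 0 where grad u = 0.\<close>
definition stable_sol ::
  "real \<Rightarrow> real \<Rightarrow> real \<Rightarrow> (real^'n \<Rightarrow> real) \<Rightarrow> (real^'n \<Rightarrow> real) \<Rightarrow> (real^'n \<Rightarrow> real) \<Rightarrow> (real^'n \<Rightarrow> real^'n) \<Rightarrow> bool" where
  "stable_sol p \<delta> \<gamma> w g u Du \<longleftrightarrow>
     (\<forall>\<phi> D\<phi>. C1_with_grad \<phi> D\<phi> \<and> compact_support \<phi> \<longrightarrow>
        (\<integral>x. w x * pw (norm (Du x)) (p - 2) * (norm (D\<phi> x))^2 \<partial>lborel)
        + (p - 2) * (\<integral>x. (if Du x = 0 then 0
                           else w x * norm (Du x) powr (p - 4) * (Du x \<bullet> D\<phi> x)^2) \<partial>lborel)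
        - (\<integral>x. g x * (\<delta> * u x powr (-\<delta> - 1) + \<gamma> * u x powr (-\<gamma> - 1)) * (\<phi> x)^2 \<partial>lborel)
        \<ge> 0)"

end

theory Submission
  imports Defs
begin

text \<open>Test the stability inequality with \<phi> = u^(-\<alpha>) \<psi>^k and the weak formulation with
  \<zeta> = u^(-2\<alpha>-1) \<psi>^(2k), where \<alpha> = \<beta> + (p-2)/2 and 2k = 2\<beta> + p - 1 + \<delta>, and add t times the second
  to the first. Pointwise, the singular terms combine to at most -(\<delta> - t) g (\<psi>/u)^(2k), while the gradient terms form an expression in
  |\<nabla>u| with top-order coefficient (p-1)\<alpha>^2 - t(2\<alpha>+1); it is negative once t > (p-1)\<alpha>^2/(2\<alpha>+1),
  and such a t < \<delta> exists precisely because \<beta> < s_p. By homogeneity the mixed terms are absorbed,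
  leaving w u^(-2\<beta>) \<psi>^(2k-p) |\<nabla>\<psi>|^p. Young's inequality with exponents 2k/(2\<beta>) and \<theta>_a' splits this
  into half of the good term (using 1/g \<le> m and \<psi> \<le> 1) plus a multiple of w^\<theta>_a' |\<nabla>\<psi>|^(p \<theta>_a').\<close>

lemma locally_integrable_borel_measurable:
  fixes w :: "real^'n \<Rightarrow> real"
  assumes "locally_integrable w"
  shows "w \<in> borel_measurable lborel"
proof (rule borel_measurable_LIMSEQ_real[where u="\<lambda>i x. indicator (cball 0 (real i)) x *\<^sub>R w x"])
  fix x :: "real^'n"
  obtain n0 :: nat where "norm x \<le> real n0" using real_arch_simple by blast
  then have "\<forall>\<^sub>F i in sequentially. indicator (cball 0 (real i)) x *\<^sub>R w x = w x"
    unfolding eventually_sequentially by (intro exI[of _ n0]) (auto simp: indicator_def dist_norm)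
  then show "(\<lambda>i. indicator (cball 0 (real i)) x *\<^sub>R w x) \<longlonglongrightarrow> w x"
    by (rule tendsto_eventually)
next
  fix i :: nat
  have "set_integrable lborel (cball 0 (real i)) w"
    using assms unfolding locally_integrable_def by auto
  then show "(\<lambda>x. indicator (cball 0 (real i)) x *\<^sub>R w x) \<in> borel_measurable lborel"
    unfolding set_integrable_def by (rule borel_measurable_integrable)
qed

lemma locally_integrable_dominated_integrable:
  fixes w h G :: "real^'n \<Rightarrow> real"
  assumes w: "locally_integrable w" and G: "continuous_on UNIV G" and K: "compact K"
    and h: "h \<in> borel_measurable lborel" "\<And>x. \<bar>h x\<bar> \<le> \<bar>w x\<bar> * \<bar>G x\<bar>" "\<And>x. x \<notin> K \<Longrightarrow> h x = 0"
  shows "integrable lborel h"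
proof -
  have "compact (G ` K)" using G K compact_continuous_image continuous_on_subset by blast
  then obtain B where B: "\<And>x. x \<in> K \<Longrightarrow> \<bar>G x\<bar> \<le> B"
    using compact_imp_bounded bounded_real by (metis image_eqI)
  have "integrable lborel (\<lambda>x. indicator K x *\<^sub>R w x)"
    using w K unfolding locally_integrable_def set_integrable_def by auto
  then have "integrable lborel (\<lambda>x. B * (indicator K x *\<^sub>R w x))"
    by (rule integrable_mult_right)
  moreover have "norm (h x) \<le> norm (B * (indicator K x *\<^sub>R w x))" for x
  proof (cases "x \<in> K")
    case True
    have "\<bar>h x\<bar> \<le> \<bar>w x\<bar> * \<bar>G x\<bar>" by (rule h(2))
    also have "\<dots> \<le> \<bar>w x\<bar> * \<bar>B\<bar>" using B[OF True] by (intro mult_left_mono) auto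
    finally show ?thesis using True by (simp add: abs_mult mult_ac)
  qed (simp add: h(3))
  ultimately show ?thesis
    using h(1) Bochner_Integration.integrable_bound by (metis (no_types, lifting) AE_I2)
qed

lemma locally_integrable_mult_integrable:
  fixes w G :: "real^'n \<Rightarrow> real"
  assumes "locally_integrable w" "continuous_on UNIV G" "compact K" "\<And>x. x \<notin> K \<Longrightarrow> G x = 0"
  shows "integrable lborel (\<lambda>x. w x * G x)"
proof (rule locally_integrable_dominated_integrable[OF assms(1-3)])
  have "w \<in> borel_measurable lborel" by (rule locally_integrable_borel_measurable[OF assms(1)])
  moreover have "G \<in> borel_measurable lborel"
    using borel_measurable_continuous_onI[OF assms(2)] by simp
  ultimately show "(\<lambda>x. w x * G x) \<in> borel_measurable lborel" by measurable
qed (auto simp: abs_mult assms(4))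

lemma C1_with_grad_continuous: "C1_with_grad f Df \<Longrightarrow> continuous_on UNIV f"
  unfolding C1_with_grad_def
  by (meson continuous_at_imp_continuous_on has_derivative_continuous)

lemma C1_with_grad_mult:
  assumes "C1_with_grad f Df" "C1_with_grad g Dg"
  shows "C1_with_grad (\<lambda>x. f x * g x) (\<lambda>x. f x *\<^sub>R Dg x + g x *\<^sub>R Df x)"
proof -
  have "((\<lambda>x. f x * g x) has_derivative (\<lambda>h. (f x *\<^sub>R Dg x + g x *\<^sub>R Df x) \<bullet> h)) (at x)" for x
  proof -
    have "((\<lambda>x. f x * g x) has_derivative (\<lambda>h. f x * (Dg x \<bullet> h) + (Df x \<bullet> h) * g x)) (at x)"
      using assms unfolding C1_with_grad_def by (auto intro!: has_derivative_mult)
    then show ?thesis by (simp add: inner_add_left algebra_simps)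
  qed
  moreover have "continuous_on UNIV (\<lambda>x. f x *\<^sub>R Dg x + g x *\<^sub>R Df x)"
    using assms C1_with_grad_continuous unfolding C1_with_grad_def
    by (auto intro!: continuous_intros)
  ultimately show ?thesis unfolding C1_with_grad_def by blast
qed

lemma C1_with_grad_powr_pos:
  assumes "C1_with_grad u Du" "\<And>x. u x > 0"
  shows "C1_with_grad (\<lambda>x. u x powr a) (\<lambda>x. (a * u x powr (a - 1)) *\<^sub>R Du x)"
proof -
  have "((\<lambda>x. u x powr a) has_derivative (\<lambda>h. ((a * u x powr (a - 1)) *\<^sub>R Du x) \<bullet> h)) (at x)" for x
  proof -
    have "(u has_derivative (\<lambda>h. Du x \<bullet> h)) (at x)" using assms unfolding C1_with_grad_def by auto
    then have "((\<lambda>x. u x powr a) has_derivative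
        (\<lambda>h. u x powr a * (0 * ln (u x) + (Du x \<bullet> h) * a / u x))) (at x)"
      using assms(2) by (intro has_derivative_powr) auto
    moreover have "(\<lambda>h. u x powr a * (0 * ln (u x) + (Du x \<bullet> h) * a / u x))
        = (\<lambda>h. ((a * u x powr (a - 1)) *\<^sub>R Du x) \<bullet> h)"
      using assms(2)[of x] by (auto simp: powr_diff field_simps)
    ultimately show ?thesis by metis
  qed
  moreover have "continuous_on UNIV (\<lambda>x. (a * u x powr (a - 1)) *\<^sub>R Du x)"
    using assms C1_with_grad_continuous[OF assms(1)] unfolding C1_with_grad_def
    by (auto intro!: continuous_intros simp: less_imp_neq[symmetric])
  ultimately show ?thesis unfolding C1_with_grad_def by blast
qed

lemma has_real_derivative_abs_powr:
  fixes k t :: real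
  assumes k: "k > 1"
  shows "((\<lambda>t. \<bar>t\<bar> powr k) has_real_derivative (k * sgn t * \<bar>t\<bar> powr (k - 1))) (at t)"
proof (cases t "0::real" rule: linorder_cases)
  case equal
  have "((\<lambda>y. \<bar>y\<bar> powr (k - 1)) \<longlongrightarrow> 0) (at (0::real))"
    using k by (auto intro!: tendsto_zero_powrI tendsto_eq_intros)
  moreover have "\<forall>\<^sub>F y in at (0::real). \<bar>y\<bar> powr (k - 1) = \<bar>(\<bar>y\<bar> powr k - \<bar>0\<bar> powr k) / (y - 0)\<bar>"
    unfolding eventually_at_filter by (rule always_eventually) (use k in \<open>auto simp: powr_diff abs_divide\<close>)
  ultimately have "((\<lambda>y. \<bar>(\<bar>y\<bar> powr k - \<bar>0\<bar> powr k) / (y - 0)\<bar>) \<longlongrightarrow> 0) (at 0)"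
    by (rule Lim_transform_eventually)
  then have "((\<lambda>y. (\<bar>y\<bar> powr k - \<bar>0\<bar> powr k) / (y - 0)) \<longlongrightarrow> 0) (at 0)"
    by (rule tendsto_rabs_zero_cancel)
  then show ?thesis using equal k by (simp add: has_field_derivative_iff)
next
  case less
  have "((\<lambda>y. (- y) powr k) has_real_derivative (k * (- t) powr (k - 1) * (- 1))) (at t)"
    using less by (auto intro!: derivative_eq_intros)
  moreover have "\<forall>\<^sub>F y in nhds t. (- y) powr k = \<bar>y\<bar> powr k"
    using eventually_nhds_in_open[of "{..<0}" t] less by (auto elim!: eventually_mono)
  ultimately show ?thesis using less
    by (subst DERIV_cong_ev[OF refl _ refl, symmetric]) auto
next
  case greater
  have "((\<lambda>t. t powr k) has_real_derivative (k * t powr (k - 1))) (at t)"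
    using greater by (rule has_real_derivative_powr)
  moreover have "\<forall>\<^sub>F y in nhds t. y powr k = \<bar>y\<bar> powr k"
    using eventually_nhds_in_open[of "{0<..}" t] greater by (auto elim!: eventually_mono)
  ultimately show ?thesis using greater
    by (subst DERIV_cong_ev[OF refl _ refl, symmetric]) auto
qed

lemma C1_with_grad_powr_nonneg:
  assumes f: "C1_with_grad f Df" "\<And>x. f x \<ge> 0" and k: "k > 1"
  shows "C1_with_grad (\<lambda>x. f x powr k) (\<lambda>x. (k * f x powr (k - 1)) *\<^sub>R Df x)"
proof -
  have "((\<lambda>x. f x powr k) has_derivative (\<lambda>h. ((k * f x powr (k - 1)) *\<^sub>R Df x) \<bullet> h)) (at x)" for x
  proof -
    have H: "((\<lambda>t. \<bar>t\<bar> powr k) has_derivative (\<lambda>h. (k * sgn (f x) * \<bar>f x\<bar> powr (k - 1)) * h)) (at (f x))"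
      using has_real_derivative_abs_powr[OF k, of "f x"] by (simp add: has_field_derivative_def)
    have d: "(f has_derivative (\<lambda>h. Df x \<bullet> h)) (at x)"
      using f unfolding C1_with_grad_def by auto
    have "((\<lambda>x. \<bar>f x\<bar> powr k) has_derivative
        (\<lambda>h. (k * sgn (f x) * \<bar>f x\<bar> powr (k - 1)) * (Df x \<bullet> h))) (at x)"
      using has_derivative_compose[OF d H] by simp
    moreover have "(\<lambda>h. (k * sgn (f x) * \<bar>f x\<bar> powr (k - 1)) * (Df x \<bullet> h))
        = (\<lambda>h. ((k * f x powr (k - 1)) *\<^sub>R Df x) \<bullet> h)"
      using f(2)[of x] by (cases "f x = 0") auto
    ultimately show ?thesis using f(2) by simp
  qed
  moreover have "continuous_on UNIV (\<lambda>x. (k * f x powr (k - 1)) *\<^sub>R Df x)"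
    using f C1_with_grad_continuous[OF f(1)] k unfolding C1_with_grad_def
    by (auto intro!: continuous_intros continuous_on_powr')
  ultimately show ?thesis unfolding C1_with_grad_def by blast
qed

lemma C1_with_grad_grad_eq_0_outside_support:
  assumes "C1_with_grad f Df" "x \<notin> closure {x. f x \<noteq> 0}"
  shows "Df x = 0"
proof -
  have "(f has_derivative (\<lambda>h. Df x \<bullet> h)) (at x)" using assms(1) unfolding C1_with_grad_def by auto
  moreover have "(f has_derivative (\<lambda>h. 0)) (at x)"
  proof (rule has_derivative_transform_within_open[of "\<lambda>_. 0"])
    show "open (- closure {x. f x \<noteq> 0})" by auto
  qed (use assms(2) closure_subset[of "{x. f x \<noteq> 0}"] in auto)
  ultimately have "(\<lambda>h. Df x \<bullet> h) = (\<lambda>h. 0)" by (rule has_derivative_unique)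
  then show ?thesis by (metis inner_eq_zero_iff)
qed

lemma C1_with_grad_compact_support_vanishing:
  assumes "C1_with_grad f Df" "compact_support f"
  obtains K where "compact K" "\<And>x. x \<notin> K \<Longrightarrow> f x = 0" "\<And>x. x \<notin> K \<Longrightarrow> Df x = 0"
proof (rule that[of "closure {x. f x \<noteq> 0}"])
  show "compact (closure {x. f x \<noteq> 0})" using assms(2) unfolding compact_support_def .
  show "f x = 0" if "x \<notin> closure {x. f x \<noteq> 0}" for x
    using that closure_subset[of "{x. f x \<noteq> 0}"] by auto
  show "Df x = 0" if "x \<notin> closure {x. f x \<noteq> 0}" for x
    using C1_with_grad_grad_eq_0_outside_support[OF assms(1) that] .
qed

lemma compact_support_subset:
  assumes "compact_support g" "{x. f x \<noteq> 0} \<subseteq> {x. g x \<noteq> 0}"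
  shows "compact_support f"
proof -
  have "closure {x. f x \<noteq> 0} \<subseteq> closure {x. g x \<noteq> 0}" using assms(2) by (rule closure_mono)
  then show ?thesis using assms(1) unfolding compact_support_def
    by (metis closed_closure compact_Int_closed inf.absorb_iff2)
qed

lemma continuous_on_pw:
  assumes "continuous_on UNIV f" "\<And>x. f x \<ge> 0" "p \<ge> 2"
  shows "continuous_on UNIV (\<lambda>x. pw (f x) (p - 2))"
proof (cases "p = 2")
  case False
  then have "continuous_on UNIV (\<lambda>x. f x powr (p - 2))"
    using assms by (intro continuous_on_powr') (auto intro: continuous_intros)
  then show ?thesis using False by (simp add: pw_def)
qed (simp add: pw_def)

lemma pw_eq_powr: "Y > 0 \<Longrightarrow> pw Y a = Y powr a"
  by (simp add: pw_def)

lemma inner_square_le_pw: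
  fixes a v :: "'v::real_inner"
  assumes p: "p \<ge> 2" and a: "a \<noteq> 0"
  shows "norm a powr (p - 4) * (a \<bullet> v)\<^sup>2 \<le> pw (norm a) (p - 2) * (norm v)\<^sup>2"
proof -
  have "\<bar>a \<bullet> v\<bar>\<^sup>2 \<le> (norm a * norm v)\<^sup>2"
    by (rule power_mono[OF Cauchy_Schwarz_ineq2 abs_ge_zero])
  then have "norm a powr (p - 4) * (a \<bullet> v)\<^sup>2 \<le> norm a powr (p - 4) * (norm a * norm v)\<^sup>2"
    by (intro mult_left_mono) auto
  also have "\<dots> = (norm a powr (p - 4) * norm a powr 2) * (norm v)\<^sup>2"
    using a by (simp add: power_mult_distrib powr_numeral)
  also have "norm a powr (p - 4) * norm a powr 2 = norm a powr (p - 2)"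
    by (subst powr_add[symmetric]) simp
  also have "\<dots> = pw (norm a) (p - 2)"
    using a by (simp add: pw_eq_powr)
  finally show ?thesis .
qed

lemma integrable_inner_square_term:
  fixes w :: "real^'n \<Rightarrow> real" and Du V :: "real^'n \<Rightarrow> real^'n"
  assumes w: "locally_integrable w" and Du: "continuous_on UNIV Du" and V: "continuous_on UNIV V"
    and K: "compact K" "\<And>x. x \<notin> K \<Longrightarrow> V x = 0" and p: "2 \<le> p"
  shows "integrable lborel (\<lambda>x. if Du x = 0 then 0 else w x * norm (Du x) powr (p - 4) * (Du x \<bullet> V x)\<^sup>2)"
proof (rule locally_integrable_dominated_integrable[OF w _ K(1)])
  show "continuous_on UNIV (\<lambda>x. pw (norm (Du x)) (p - 2) * (norm (V x))\<^sup>2)"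
    using Du V p by (intro continuous_intros continuous_on_pw) auto
  have "{x \<in> space lborel. Du x = 0} \<in> sets lborel"
    using closed_Collect_eq[OF Du continuous_on_const] by simp
  moreover have "Du \<in> borel_measurable lborel" "V \<in> borel_measurable lborel"
    using Du V borel_measurable_continuous_onI by auto
  ultimately show "(\<lambda>x. if Du x = 0 then 0 else w x * norm (Du x) powr (p - 4) * (Du x \<bullet> V x)\<^sup>2)
      \<in> borel_measurable lborel"
    using locally_integrable_borel_measurable[OF w] by (intro measurable_If) auto
  show "\<bar>if Du x = 0 then 0 else w x * norm (Du x) powr (p - 4) * (Du x \<bullet> V x)\<^sup>2\<bar>
      \<le> \<bar>w x\<bar> * \<bar>pw (norm (Du x)) (p - 2) * (norm (V x))\<^sup>2\<bar>" for x
  proof (cases "Du x = 0")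
    case False
    have "\<bar>w x\<bar> * (norm (Du x) powr (p - 4) * (Du x \<bullet> V x)\<^sup>2)
        \<le> \<bar>w x\<bar> * (pw (norm (Du x)) (p - 2) * (norm (V x))\<^sup>2)"
      by (rule mult_left_mono[OF inner_square_le_pw[OF p False]]) simp
    then show ?thesis using False by (simp add: abs_mult pw_def mult.assoc)
  qed simp
qed (use K(2) in simp)

definition stability_density ::
  "real \<Rightarrow> real \<Rightarrow> real \<Rightarrow> real \<Rightarrow> real \<Rightarrow> real \<Rightarrow> 'v::real_inner \<Rightarrow> real \<Rightarrow> 'v \<Rightarrow> real" where
  "stability_density p \<delta> \<gamma> W G U a \<phi> D\<phi> =
     W * pw (norm a) (p - 2) * (norm D\<phi>)\<^sup>2
     + (p - 2) * (if a = 0 then 0 else W * norm a powr (p - 4) * (a \<bullet> D\<phi>)\<^sup>2)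
     - G * (\<delta> * U powr (-\<delta> - 1) + \<gamma> * U powr (-\<gamma> - 1)) * \<phi>\<^sup>2"

definition weak_density ::
  "real \<Rightarrow> real \<Rightarrow> real \<Rightarrow> real \<Rightarrow> real \<Rightarrow> real \<Rightarrow> 'v::real_inner \<Rightarrow> real \<Rightarrow> 'v \<Rightarrow> real" where
  "weak_density p \<delta> \<gamma> W G U a \<zeta> D\<zeta> =
     W * pw (norm a) (p - 2) * (a \<bullet> D\<zeta>) - G * (- (U powr (-\<delta>)) - U powr (-\<gamma>)) * \<zeta>"

lemma stable_sol_density_integral_nonneg:
  fixes w g u \<phi> :: "real^'n \<Rightarrow> real" and Du D\<phi> :: "real^'n \<Rightarrow> real^'n"
  assumes stable: "stable_sol p \<delta> \<gamma> w g u Du"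
    and w: "locally_integrable w" and g: "locally_integrable g"
    and u: "C1_with_grad u Du" "\<And>x. 0 < u x" and p: "2 \<le> p"
    and \<phi>: "C1_with_grad \<phi> D\<phi>" "compact_support \<phi>"
  shows "integrable lborel (\<lambda>x. stability_density p \<delta> \<gamma> (w x) (g x) (u x) (Du x) (\<phi> x) (D\<phi> x))"
    and "0 \<le> (\<integral>x. stability_density p \<delta> \<gamma> (w x) (g x) (u x) (Du x) (\<phi> x) (D\<phi> x) \<partial>lborel)"
proof -
  obtain K where K: "compact K" and vanish: "\<And>x. x \<notin> K \<Longrightarrow> \<phi> x = 0" "\<And>x. x \<notin> K \<Longrightarrow> D\<phi> x = 0"
    using C1_with_grad_compact_support_vanishing[OF \<phi>] by blast
  have cont: "continuous_on UNIV u" "continuous_on UNIV Du" "continuous_on UNIV \<phi>" "continuous_on UNIV D\<phi>"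
    using u(1) \<phi>(1) C1_with_grad_continuous unfolding C1_with_grad_def by blast+
  have i1: "integrable lborel (\<lambda>x. w x * pw (norm (Du x)) (p - 2) * (norm (D\<phi> x))\<^sup>2)"
  proof -
    have "continuous_on UNIV (\<lambda>x. pw (norm (Du x)) (p - 2) * (norm (D\<phi> x))\<^sup>2)"
      using cont p by (intro continuous_intros continuous_on_pw) auto
    from locally_integrable_mult_integrable[OF w this K] show ?thesis
      using vanish by (simp add: mult.assoc)
  qed
  have i2: "integrable lborel
      (\<lambda>x. if Du x = 0 then 0 else w x * norm (Du x) powr (p - 4) * (Du x \<bullet> D\<phi> x)\<^sup>2)"
    by (rule integrable_inner_square_term[OF w cont(2,4) K vanish(2) p])
  have i3: "integrable lborel (\<lambda>x. g x * (\<delta> * u x powr (-\<delta> - 1) + \<gamma> * u x powr (-\<gamma> - 1)) * (\<phi> x)\<^sup>2)"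
  proof -
    have "continuous_on UNIV (\<lambda>x. (\<delta> * u x powr (-\<delta> - 1) + \<gamma> * u x powr (-\<gamma> - 1)) * (\<phi> x)\<^sup>2)"
      using cont u(2) by (auto intro!: continuous_intros simp: less_imp_neq[symmetric])
    from locally_integrable_mult_integrable[OF g this K] show ?thesis
      using vanish by (simp add: mult.assoc)
  qed
  show "integrable lborel (\<lambda>x. stability_density p \<delta> \<gamma> (w x) (g x) (u x) (Du x) (\<phi> x) (D\<phi> x))"
    unfolding stability_density_def using i1 i2 i3 by simp
  show "0 \<le> (\<integral>x. stability_density p \<delta> \<gamma> (w x) (g x) (u x) (Du x) (\<phi> x) (D\<phi> x) \<partial>lborel)"
    using stable \<phi> i1 i2 i3 unfolding stable_sol_def stability_density_def by simp
qed

lemma weak_solution_density_integral_eq_0: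
  fixes w g u \<zeta> :: "real^'n \<Rightarrow> real" and Du D\<zeta> :: "real^'n \<Rightarrow> real^'n"
  assumes weak: "weak_solution p \<delta> \<gamma> w g u Du"
    and w: "locally_integrable w" and g: "locally_integrable g"
    and u: "C1_with_grad u Du" "\<And>x. 0 < u x" and p: "2 \<le> p"
    and \<zeta>: "C1_with_grad \<zeta> D\<zeta>" "compact_support \<zeta>"
  shows "integrable lborel (\<lambda>x. weak_density p \<delta> \<gamma> (w x) (g x) (u x) (Du x) (\<zeta> x) (D\<zeta> x))"
    and "(\<integral>x. weak_density p \<delta> \<gamma> (w x) (g x) (u x) (Du x) (\<zeta> x) (D\<zeta> x) \<partial>lborel) = 0"
proof -
  obtain K where K: "compact K" and vanish: "\<And>x. x \<notin> K \<Longrightarrow> \<zeta> x = 0" "\<And>x. x \<notin> K \<Longrightarrow> D\<zeta> x = 0"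
    using C1_with_grad_compact_support_vanishing[OF \<zeta>] by blast
  have cont: "continuous_on UNIV u" "continuous_on UNIV Du" "continuous_on UNIV \<zeta>" "continuous_on UNIV D\<zeta>"
    using u(1) \<zeta>(1) C1_with_grad_continuous unfolding C1_with_grad_def by blast+
  have i1: "integrable lborel (\<lambda>x. w x * pw (norm (Du x)) (p - 2) * (Du x \<bullet> D\<zeta> x))"
  proof -
    have "continuous_on UNIV (\<lambda>x. pw (norm (Du x)) (p - 2) * (Du x \<bullet> D\<zeta> x))"
      using cont p by (intro continuous_intros continuous_on_pw) auto
    from locally_integrable_mult_integrable[OF w this K] show ?thesis
      using vanish by (simp add: mult.assoc)
  qed
  have i2: "integrable lborel (\<lambda>x. g x * (- (u x powr (-\<delta>)) - u x powr (-\<gamma>)) * \<zeta> x)"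
  proof -
    have "continuous_on UNIV (\<lambda>x. (- (u x powr (-\<delta>)) - u x powr (-\<gamma>)) * \<zeta> x)"
      using cont u(2) by (auto intro!: continuous_intros simp: less_imp_neq[symmetric])
    from locally_integrable_mult_integrable[OF g this K] show ?thesis
      using vanish by (simp add: mult.assoc)
  qed
  show "integrable lborel (\<lambda>x. weak_density p \<delta> \<gamma> (w x) (g x) (u x) (Du x) (\<zeta> x) (D\<zeta> x))"
    unfolding weak_density_def using i1 i2 by simp
  show "(\<integral>x. weak_density p \<delta> \<gamma> (w x) (g x) (u x) (Du x) (\<zeta> x) (D\<zeta> x) \<partial>lborel) = 0"
    using weak \<zeta> i1 i2 unfolding weak_solution_def weak_density_def by simp
qed

definition singular_cutoff :: "real \<Rightarrow> real \<Rightarrow> real \<Rightarrow> real \<Rightarrow> real" where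
  "singular_cutoff a k U P = U powr (-a) * P powr k"

definition singular_cutoff_grad :: "real \<Rightarrow> real \<Rightarrow> real \<Rightarrow> real \<Rightarrow> 'v \<Rightarrow> 'v \<Rightarrow> 'v::real_vector" where
  "singular_cutoff_grad a k U P DU DP =
     U powr (-a) *\<^sub>R ((k * P powr (k - 1)) *\<^sub>R DP) + P powr k *\<^sub>R ((-a * U powr (-a - 1)) *\<^sub>R DU)"

lemma C1_with_grad_singular_cutoff:
  assumes "C1_with_grad u Du" "\<And>x. 0 < u x" "C1_with_grad \<psi> D\<psi>" "\<And>x. 0 \<le> \<psi> x" "k > 1"
  shows "C1_with_grad (\<lambda>x. singular_cutoff a k (u x) (\<psi> x))
                      (\<lambda>x. singular_cutoff_grad a k (u x) (\<psi> x) (Du x) (D\<psi> x))"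
  unfolding singular_cutoff_def singular_cutoff_grad_def
  by (rule C1_with_grad_mult[OF C1_with_grad_powr_pos[OF assms(1,2)] C1_with_grad_powr_nonneg[OF assms(3-5)]])

lemma compact_support_singular_cutoff:
  assumes "compact_support \<psi>"
  shows "compact_support (\<lambda>x. singular_cutoff a k (u x) (\<psi> x))"
  by (rule compact_support_subset[OF assms]) (auto simp: singular_cutoff_def)

lemma singular_cutoff_gradient_expansion:
  fixes a b :: "'v::real_inner"
  assumes U: "U > 0" and P: "P > 0"
  shows "(p - 1) * (norm (singular_cutoff_grad \<alpha> k U P a b))\<^sup>2
           + t * (a \<bullet> singular_cutoff_grad (2 * \<alpha> + 1) (2 * k) U P a b)
         = (p - 1) * (U powr (-2 * \<alpha>) * (k * P powr (k - 1))\<^sup>2) * (norm b)\<^sup>2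
           + (2 * t - 2 * (p - 1) * \<alpha>) * (U powr (-2 * \<alpha> - 1) * P powr k * (k * P powr (k - 1))) * (a \<bullet> b)
           - (t * (2 * \<alpha> + 1) - (p - 1) * \<alpha>\<^sup>2) * (U powr (-2 * \<alpha> - 2) * (P powr k)\<^sup>2) * (norm a)\<^sup>2"
proof -
  define \<eta> where "\<eta> = P powr k"
  define e where "e = k * P powr (k - 1)"
  have u: "U powr (-\<alpha>) * U powr (-\<alpha>) = U powr (-2 * \<alpha>)"
    "U powr (-\<alpha>) * U powr (-\<alpha> - 1) = U powr (-2 * \<alpha> - 1)"
    "U powr (-\<alpha> - 1) * U powr (-\<alpha> - 1) = U powr (-2 * \<alpha> - 2)"
    "U powr (-(2 * \<alpha> + 1)) = U powr (-2 * \<alpha> - 1)"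
    by (simp_all flip: powr_add)
  have u5: "U powr (-(2 * \<alpha> + 1) - 1) = U powr (-2 * \<alpha> - 2)"
    by (rule arg_cong[where f="\<lambda>e. U powr e"]) simp
  have pk: "P powr (2 * k) = \<eta> * \<eta>" "2 * k * P powr (2 * k - 1) = 2 * (\<eta> * e)"
    unfolding \<eta>_def e_def using P by (simp_all flip: powr_add)
  have n2: "(norm (singular_cutoff_grad \<alpha> k U P a b))\<^sup>2
      = U powr (-2 * \<alpha>) * e\<^sup>2 * (norm b)\<^sup>2 - 2 * \<alpha> * U powr (-2 * \<alpha> - 1) * \<eta> * e * (a \<bullet> b)
        + \<alpha>\<^sup>2 * U powr (-2 * \<alpha> - 2) * \<eta>\<^sup>2 * (norm a)\<^sup>2"
    unfolding singular_cutoff_grad_def power2_norm_eq_inner \<eta>_def[symmetric] e_def[symmetric] u(1-3)[symmetric]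
    by (simp add: inner_add_left inner_add_right inner_commute[of b a] algebra_simps power2_eq_square)
  have ip: "a \<bullet> singular_cutoff_grad (2 * \<alpha> + 1) (2 * k) U P a b
      = 2 * U powr (-2 * \<alpha> - 1) * \<eta> * e * (a \<bullet> b) - (2 * \<alpha> + 1) * U powr (-2 * \<alpha> - 2) * \<eta>\<^sup>2 * (norm a)\<^sup>2"
    unfolding singular_cutoff_grad_def power2_norm_eq_inner u(4) u5 pk
    by (simp add: inner_add_right algebra_simps power2_eq_square)
  show ?thesis
    unfolding n2 ip \<eta>_def[symmetric] e_def[symmetric] by (simp add: algebra_simps)
qed

lemma absorption_scalar_bound:
  fixes p \<kappa> c1 c2 r :: real
  assumes p: "p \<ge> 2" and \<kappa>: "\<kappa> > 0" and c: "c1 \<ge> 0" "c2 \<ge> 0" and r: "r > 0"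
  defines "R \<equiv> max 1 ((c1 + c2) / \<kappa>)"
  shows "- \<kappa> * r powr p + c1 * r powr (p - 1) + c2 * r powr (p - 2) \<le> c1 * R powr (p - 1) + c2 * R powr (p - 2)"
proof (cases "r \<le> R")
  case True
  have "c1 * r powr (p - 1) \<le> c1 * R powr (p - 1)" "c2 * r powr (p - 2) \<le> c2 * R powr (p - 2)"
    using True r p c by (auto intro!: mult_left_mono powr_mono2)
  moreover have "\<kappa> * r powr p \<ge> 0" using \<kappa> by simp
  ultimately show ?thesis by linarith
next
  case False
  then have "r \<ge> 1" and "(c1 + c2) / \<kappa> < r" by (auto simp: R_def)
  then have "c1 + c2 \<le> \<kappa> * r" using \<kappa> by (simp add: pos_divide_less_eq mult.commute)
  have "c1 * r powr (p - 1) + c2 * r powr (p - 2) \<le> (c1 + c2) * r powr (p - 1)"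
    using \<open>r \<ge> 1\<close> c powr_mono[of "p - 2" "p - 1" r] by (simp add: algebra_simps mult_left_mono)
  also have "\<dots> \<le> (\<kappa> * r) * r powr (p - 1)"
    using \<open>c1 + c2 \<le> \<kappa> * r\<close> by (simp add: mult_right_mono)
  also have "\<dots> = \<kappa> * r powr p"
    using r by (simp add: powr_diff field_simps)
  moreover have "0 \<le> c1 * R powr (p - 1)" "0 \<le> c2 * R powr (p - 2)" using c by simp_all
  ultimately show ?thesis by linarith
qed

lemma absorption_bound:
  fixes p \<kappa> c1 c2 :: real
  assumes p: "p \<ge> 2" and \<kappa>: "\<kappa> > 0" and c: "c1 \<ge> 0" "c2 \<ge> 0"
  obtains C where "C \<ge> 0"
    "\<And>Y V. 0 \<le> Y \<Longrightarrow> 0 \<le> V \<Longrightarrow>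
       - \<kappa> * Y powr p + c1 * Y powr (p - 1) * V + c2 * pw Y (p - 2) * V\<^sup>2 \<le> C * V powr p"
proof -
  define R where "R = max 1 ((c1 + c2) / \<kappa>)"
  define C where "C = c1 * R powr (p - 1) + c2 * R powr (p - 2)"
  have "1 \<le> R powr (p - 2)" using p by (intro ge_one_powr_ge_zero) (auto simp: R_def)
  then have "c2 \<le> c2 * R powr (p - 2)" using c mult_left_mono[of 1 "R powr (p - 2)" c2] by simp
  moreover have "0 \<le> c1 * R powr (p - 1)" using c by simp
  ultimately have "C \<ge> 0" "c2 \<le> C" using c unfolding C_def by linarith+
  moreover have "- \<kappa> * Y powr p + c1 * Y powr (p - 1) * V + c2 * pw Y (p - 2) * V\<^sup>2 \<le> C * V powr p"
    if Y: "0 \<le> Y" and V: "0 \<le> V" for Y V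
  proof (cases "Y = 0 \<or> V = 0")
    case True
    then show ?thesis
      using Y V p \<kappa> \<open>C \<ge> 0\<close> \<open>c2 \<le> C\<close> mult_right_mono[of c2 C "V\<^sup>2"]
      by (auto simp: pw_def powr_numeral)
  next
    case False
    define r where "r = Y / V"
    have "r > 0" "Y = r * V" using False Y V by (auto simp: r_def)
    then have "- \<kappa> * Y powr p + c1 * Y powr (p - 1) * V + c2 * pw Y (p - 2) * V\<^sup>2
        = (- \<kappa> * r powr p + c1 * r powr (p - 1) + c2 * r powr (p - 2)) * V powr p"
      using False V
      by (simp add: pw_eq_powr powr_mult powr_diff power2_eq_square algebra_simps)
    also have "\<dots> \<le> C * V powr p"
      unfolding C_def R_def using absorption_scalar_bound[OF p \<kappa> c \<open>r > 0\<close>]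
      by (rule mult_right_mono) simp
    finally show ?thesis .
  qed
  ultimately show ?thesis using that by blast
qed

lemma pw_mult_square: "p \<ge> 2 \<Longrightarrow> N \<ge> 0 \<Longrightarrow> pw N (p - 2) * N\<^sup>2 = N powr p"
  by (cases "N = 0") (auto simp: pw_def powr_diff power2_eq_square powr_numeral)

lemma pw_mult_self: "p \<ge> 2 \<Longrightarrow> N \<ge> 0 \<Longrightarrow> pw N (p - 2) * N = N powr (p - 1)"
  by (cases "N = 0") (auto simp: pw_def powr_diff power2_eq_square)

lemma pw_mult_pos: "X > 0 \<Longrightarrow> N \<ge> 0 \<Longrightarrow> pw (X * N) (p - 2) = X powr (p - 2) * pw N (p - 2)"
  by (cases "N = 0") (auto simp: pw_def powr_mult)

text \<open>Rescaling N = |\<nabla>u| and B = |\<nabla>\<psi>| by suitable powers of u and \<psi> makes the three terms of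
  singular_cutoff_gradient_expansion homogeneous of degree p in the new variables Y and V.\<close>

lemma singular_cutoff_scaling:
  fixes U P N B p \<alpha> \<beta> q k :: real
  assumes U: "U > 0" and P: "P > 0" and NB: "N \<ge> 0" "B \<ge> 0" and p: "p \<ge> 2"
    and \<alpha>: "\<alpha> = \<beta> + (p - 2) / 2" and k: "k = q / 2" "k > 0"
  defines "Y \<equiv> U powr (-(2 * \<alpha> + 2) / p) * P powr (q / p) * N"
    and "V \<equiv> U powr (-2 * \<beta> / p) * P powr ((q - p) / p) * B"
  shows "pw N (p - 2) * (U powr (-2 * \<alpha> - 2) * (P powr k)\<^sup>2) * N\<^sup>2 = Y powr p"
    and "pw N (p - 2) * (U powr (-2 * \<alpha> - 1) * P powr k * (k * P powr (k - 1))) * (N * B)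
           = k * Y powr (p - 1) * V"
    and "pw N (p - 2) * (U powr (-2 * \<alpha>) * (k * P powr (k - 1))\<^sup>2) * B\<^sup>2 = k\<^sup>2 * pw Y (p - 2) * V\<^sup>2"
    and "V powr p = U powr (-2 * \<beta>) * P powr (q - p) * B powr p"
proof -
  define X where "X = U powr (-(2 * \<alpha> + 2) / p) * P powr (q / p)"
  define Z where "Z = U powr (-2 * \<beta> / p) * P powr ((q - p) / p)"
  have XZ: "X > 0" "Z > 0" using U P by (auto simp: X_def Z_def)
  have YV: "Y = X * N" "V = Z * B" by (simp_all add: Y_def V_def X_def Z_def)
  have p0: "p \<noteq> 0" using p by simp
  have \<beta>: "\<beta> = \<alpha> - (p - 2) / 2" using \<alpha> by simp
  have "X powr p = U powr (-2 * \<alpha> - 2) * (P powr k)\<^sup>2"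
    using U P XZ by (subst ln_inj_iff[symmetric])
      (auto simp: X_def ln_mult ln_powr power2_eq_square k field_simps p0)
  then show "pw N (p - 2) * (U powr (-2 * \<alpha> - 2) * (P powr k)\<^sup>2) * N\<^sup>2 = Y powr p"
    using XZ NB pw_mult_square[OF p NB(1)] by (simp add: YV powr_mult mult_ac)
  have e: "U powr (-2 * \<alpha> - 1) * P powr k * (k * P powr (k - 1)) = k * (X powr (p - 1) * Z)"
    using U P XZ k by (subst mult_left_cancel[of k, symmetric], simp, subst ln_inj_iff[symmetric])
      (auto simp: X_def Z_def ln_mult ln_powr \<beta> field_simps p0)
  have "pw N (p - 2) * (U powr (-2 * \<alpha> - 1) * P powr k * (k * P powr (k - 1))) * (N * B)
      = (U powr (-2 * \<alpha> - 1) * P powr k * (k * P powr (k - 1))) * (pw N (p - 2) * N) * B"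
    by (simp only: mult_ac)
  also have "\<dots> = k * (X powr (p - 1) * Z) * (pw N (p - 2) * N) * B"
    unfolding e ..
  also have "\<dots> = k * Y powr (p - 1) * V"
    using XZ NB pw_mult_self[OF p NB(1)] by (simp add: YV powr_mult mult_ac)
  finally show "pw N (p - 2) * (U powr (-2 * \<alpha> - 1) * P powr k * (k * P powr (k - 1))) * (N * B)
      = k * Y powr (p - 1) * V" .
  have e3: "U powr (-2 * \<alpha>) * (k * P powr (k - 1))\<^sup>2 = k\<^sup>2 * (X powr (p - 2) * Z\<^sup>2)"
    using U P XZ k by (subst mult_left_cancel[of "k\<^sup>2", symmetric], simp, subst ln_inj_iff[symmetric])
      (auto simp: X_def Z_def ln_mult ln_powr power2_eq_square \<beta> field_simps p0)
  show "pw N (p - 2) * (U powr (-2 * \<alpha>) * (k * P powr (k - 1))\<^sup>2) * B\<^sup>2 = k\<^sup>2 * pw Y (p - 2) * V\<^sup>2"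
    unfolding YV pw_mult_pos[OF XZ(1) NB(1)] e3 by (simp add: power_mult_distrib mult_ac)
  have "Z powr p = U powr (-2 * \<beta>) * P powr (q - p)"
    using U P XZ by (subst ln_inj_iff[symmetric]) (auto simp: Z_def ln_mult ln_powr field_simps p0)
  then show "V powr p = U powr (-2 * \<beta>) * P powr (q - p) * B powr p"
    using XZ NB by (simp add: YV powr_mult)
qed

lemma singular_cutoff_gradient_scaled:
  fixes a b :: "'v::real_inner" and p t \<alpha> \<beta> q k U P W :: real
  assumes U: "U > 0" and P: "P > 0" and W: "W \<ge> 0" and p: "p \<ge> 2"
    and \<alpha>: "\<alpha> = \<beta> + (p - 2) / 2" and k: "k = q / 2" "k > 0"
  defines "Y \<equiv> U powr (-(2 * \<alpha> + 2) / p) * P powr (q / p) * norm a"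
    and "V \<equiv> U powr (-2 * \<beta> / p) * P powr ((q - p) / p) * norm b"
  shows "(p - 1) * (W * pw (norm a) (p - 2) * (norm (singular_cutoff_grad \<alpha> k U P a b))\<^sup>2)
         + t * (W * pw (norm a) (p - 2) * (a \<bullet> singular_cutoff_grad (2 * \<alpha> + 1) (2 * k) U P a b))
         \<le> W * (- (t * (2 * \<alpha> + 1) - (p - 1) * \<alpha>\<^sup>2) * Y powr p
                + \<bar>2 * t - 2 * (p - 1) * \<alpha>\<bar> * k * Y powr (p - 1) * V + (p - 1) * k\<^sup>2 * pw Y (p - 2) * V\<^sup>2)"
proof -
  define c \<kappa> where "c = 2 * t - 2 * (p - 1) * \<alpha>" and "\<kappa> = t * (2 * \<alpha> + 1) - (p - 1) * \<alpha>\<^sup>2"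
  define M where "M = pw (norm a) (p - 2)"
  define L1 L2 L3 where "L1 = U powr (-2 * \<alpha>) * (k * P powr (k - 1))\<^sup>2"
    and "L2 = U powr (-2 * \<alpha> - 1) * P powr k * (k * P powr (k - 1))"
    and "L3 = U powr (-2 * \<alpha> - 2) * (P powr k)\<^sup>2"
  have "M \<ge> 0" "L2 \<ge> 0" using k by (simp_all add: M_def L2_def pw_def)
  note scaling = singular_cutoff_scaling[OF U P norm_ge_zero[of a] norm_ge_zero[of b] p \<alpha> k,
      folded M_def L1_def L2_def L3_def Y_def V_def]
  have "c * (a \<bullet> b) \<le> \<bar>c\<bar> * (norm a * norm b)"
    using mult_left_mono[OF Cauchy_Schwarz_ineq2[of a b], of "\<bar>c\<bar>"] abs_ge_self[of "c * (a \<bullet> b)"]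
    by (simp add: abs_mult)
  then have CS: "L2 * (c * (a \<bullet> b)) \<le> L2 * (\<bar>c\<bar> * (norm a * norm b))"
    using \<open>L2 \<ge> 0\<close> by (rule mult_left_mono)
  have "(p - 1) * (W * M * (norm (singular_cutoff_grad \<alpha> k U P a b))\<^sup>2)
        + t * (W * M * (a \<bullet> singular_cutoff_grad (2 * \<alpha> + 1) (2 * k) U P a b))
      = W * M * ((p - 1) * (norm (singular_cutoff_grad \<alpha> k U P a b))\<^sup>2
        + t * (a \<bullet> singular_cutoff_grad (2 * \<alpha> + 1) (2 * k) U P a b))"
    by (simp add: algebra_simps)
  also have "\<dots> = W * M * ((p - 1) * L1 * (norm b)\<^sup>2 + L2 * (c * (a \<bullet> b)) - \<kappa> * L3 * (norm a)\<^sup>2)"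
    unfolding singular_cutoff_gradient_expansion[OF U P] c_def \<kappa>_def L1_def L2_def L3_def
    by (simp add: mult_ac)
  also have "\<dots> \<le> W * M * ((p - 1) * L1 * (norm b)\<^sup>2 + L2 * (\<bar>c\<bar> * (norm a * norm b))
      - \<kappa> * L3 * (norm a)\<^sup>2)"
    using CS W \<open>M \<ge> 0\<close> by (intro mult_left_mono) auto
  also have "\<dots> = W * (- \<kappa> * (M * L3 * (norm a)\<^sup>2) + \<bar>c\<bar> * (M * L2 * (norm a * norm b))
      + (p - 1) * (M * L1 * (norm b)\<^sup>2))"
    by (simp add: algebra_simps)
  also have "\<dots> = W * (- \<kappa> * Y powr p + \<bar>c\<bar> * k * Y powr (p - 1) * V + (p - 1) * k\<^sup>2 * pw Y (p - 2) * V\<^sup>2)"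
    unfolding scaling(1-3) by (simp add: algebra_simps)
  finally show ?thesis by (simp add: M_def c_def \<kappa>_def)
qed

lemma singular_cutoff_gradient_bound:
  fixes p t \<alpha> \<beta> q k :: real
  assumes p: "p \<ge> 2" and \<alpha>: "\<alpha> = \<beta> + (p - 2) / 2" and k: "k = q / 2" "k > 1"
    and \<kappa>: "t * (2 * \<alpha> + 1) - (p - 1) * \<alpha>\<^sup>2 > 0"
  obtains C where "C \<ge> 0"
    "\<And>(a :: 'v::real_inner) b U P W. 0 < U \<Longrightarrow> 0 \<le> P \<Longrightarrow> 0 \<le> W \<Longrightarrow>
       (p - 1) * (W * pw (norm a) (p - 2) * (norm (singular_cutoff_grad \<alpha> k U P a b))\<^sup>2)
       + t * (W * pw (norm a) (p - 2) * (a \<bullet> singular_cutoff_grad (2 * \<alpha> + 1) (2 * k) U P a b))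
       \<le> W * C * (U powr (-2 * \<beta>) * P powr (q - p) * norm b powr p)"
proof -
  have c: "\<bar>2 * t - 2 * (p - 1) * \<alpha>\<bar> * k \<ge> 0" "(p - 1) * k\<^sup>2 \<ge> 0" using p k by auto
  obtain C where C: "C \<ge> 0" and absorb: "\<And>Y V. 0 \<le> Y \<Longrightarrow> 0 \<le> V \<Longrightarrow>
      - (t * (2 * \<alpha> + 1) - (p - 1) * \<alpha>\<^sup>2) * Y powr p + \<bar>2 * t - 2 * (p - 1) * \<alpha>\<bar> * k * Y powr (p - 1) * V
        + (p - 1) * k\<^sup>2 * pw Y (p - 2) * V\<^sup>2 \<le> C * V powr p"
    using absorption_bound[OF p \<kappa> c] by blast
  have "(p - 1) * (W * pw (norm a) (p - 2) * (norm (singular_cutoff_grad \<alpha> k U P a b))\<^sup>2)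
       + t * (W * pw (norm a) (p - 2) * (a \<bullet> singular_cutoff_grad (2 * \<alpha> + 1) (2 * k) U P a b))
       \<le> W * C * (U powr (-2 * \<beta>) * P powr (q - p) * norm b powr p)"
    if U: "0 < U" and P: "0 \<le> P" and W: "0 \<le> W" for a b :: 'v and U P W
  proof (cases "P = 0")
    case True
    then show ?thesis using k W C by (simp add: singular_cutoff_grad_def)
  next
    case False
    then have "P > 0" using P by simp
    define Y V where "Y = U powr (-(2 * \<alpha> + 2) / p) * P powr (q / p) * norm a"
      and "V = U powr (-2 * \<beta> / p) * P powr ((q - p) / p) * norm b"
    have "Y \<ge> 0" "V \<ge> 0" using U P by (simp_all add: Y_def V_def)
    have "k > 0" using k by simp
    note scaled = singular_cutoff_gradient_scaled[OF U \<open>P > 0\<close> W p \<alpha> k(1) \<open>k > 0\<close>, of a b t,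
        folded Y_def V_def]
    also have "W * (- (t * (2 * \<alpha> + 1) - (p - 1) * \<alpha>\<^sup>2) * Y powr p
        + \<bar>2 * t - 2 * (p - 1) * \<alpha>\<bar> * k * Y powr (p - 1) * V + (p - 1) * k\<^sup>2 * pw Y (p - 2) * V\<^sup>2)
        \<le> W * (C * V powr p)"
      using absorb[OF \<open>Y \<ge> 0\<close> \<open>V \<ge> 0\<close>] W by (rule mult_left_mono)
    also have "V powr p = U powr (-2 * \<beta>) * P powr (q - p) * norm b powr p"
      using singular_cutoff_scaling(4)[OF U \<open>P > 0\<close> norm_ge_zero norm_ge_zero p \<alpha> k(1) \<open>k > 0\<close>]
      unfolding V_def .
    finally show ?thesis by (simp add: mult.assoc)
  qed
  with C that show ?thesis by blast
qed

lemma nonlinearity_terms_bound: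
  fixes G U P \<delta> \<gamma> t \<alpha> k q :: real
  assumes G: "G \<ge> 0" and U: "U > 0" and P: "P \<ge> 0" and t: "t < \<gamma>"
    and q: "q = 2 * \<alpha> + 1 + \<delta>" and k: "2 * k = q"
  shows "- (G * (\<delta> * U powr (-\<delta> - 1) + \<gamma> * U powr (-\<gamma> - 1)) * (singular_cutoff \<alpha> k U P)\<^sup>2)
         - t * (G * (- (U powr (-\<delta>)) - U powr (-\<gamma>)) * singular_cutoff (2 * \<alpha> + 1) (2 * k) U P)
         \<le> - (\<delta> - t) * (G * (P / U) powr q)"
proof -
  define Q where "Q = P powr q"
  have cutoffs: "(singular_cutoff \<alpha> k U P)\<^sup>2 = U powr (-2 * \<alpha>) * Q"
    "singular_cutoff (2 * \<alpha> + 1) (2 * k) U P = U powr (-2 * \<alpha> - 1) * Q"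
    unfolding singular_cutoff_def Q_def k[symmetric] using U
    by (simp_all add: power2_eq_square powr_add[symmetric] mult_ac)
  have exps: "U powr (-\<delta> - 1) * U powr (-2 * \<alpha>) = U powr (-q)"
    "U powr (-\<delta>) * U powr (-2 * \<alpha> - 1) = U powr (-q)"
    "U powr (-\<gamma> - 1) * U powr (-2 * \<alpha>) = U powr (-\<gamma> - 1 - 2 * \<alpha>)"
    "U powr (-\<gamma>) * U powr (-2 * \<alpha> - 1) = U powr (-\<gamma> - 1 - 2 * \<alpha>)"
    by (subst powr_add[symmetric], rule arg_cong[where f="\<lambda>e. U powr e"], simp add: q)+
  have "- (G * (\<delta> * U powr (-\<delta> - 1) + \<gamma> * U powr (-\<gamma> - 1)) * (singular_cutoff \<alpha> k U P)\<^sup>2)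
         - t * (G * (- (U powr (-\<delta>)) - U powr (-\<gamma>)) * singular_cutoff (2 * \<alpha> + 1) (2 * k) U P)
      = - \<delta> * G * Q * (U powr (-\<delta> - 1) * U powr (-2 * \<alpha>)) - \<gamma> * G * Q * (U powr (-\<gamma> - 1) * U powr (-2 * \<alpha>))
        + t * G * Q * (U powr (-\<delta>) * U powr (-2 * \<alpha> - 1)) + t * G * Q * (U powr (-\<gamma>) * U powr (-2 * \<alpha> - 1))"
    unfolding cutoffs by (simp add: algebra_simps)
  also have "\<dots> = - (\<delta> - t) * (G * (Q * U powr (-q))) - (\<gamma> - t) * (G * Q * U powr (-\<gamma> - 1 - 2 * \<alpha>))"
    unfolding exps by (simp add: algebra_simps)
  also have "\<dots> \<le> - (\<delta> - t) * (G * (Q * U powr (-q)))"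
    using t G by (simp add: Q_def)
  also have "Q * U powr (-q) = (P / U) powr q"
    using U P by (subst powr_divide) (auto simp: Q_def powr_minus divide_inverse)
  finally show ?thesis .
qed

lemma Youngs_inequality_weighted:
  fixes \<theta> \<theta>' \<epsilon> x y :: real
  assumes \<theta>: "\<theta> > 1" "\<theta>' > 1" "1 / \<theta> + 1 / \<theta>' = 1" and \<epsilon>: "\<epsilon> > 0" and xy: "x \<ge> 0" "y \<ge> 0"
  shows "x * y \<le> \<epsilon> * x powr \<theta> + (\<epsilon> * \<theta>) powr (-\<theta>' / \<theta>) * y powr \<theta>' / \<theta>'"
proof -
  define c where "c = \<epsilon> * \<theta>"
  have c: "c > 0" using \<theta> \<epsilon> by (simp add: c_def)
  have "c powr (1 / \<theta>) * c powr (-1 / \<theta>) = 1"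
    using c by (simp flip: powr_add)
  moreover have "(c powr (1 / \<theta>) * x) * (c powr (-1 / \<theta>) * y) = (c powr (1 / \<theta>) * c powr (-1 / \<theta>)) * (x * y)"
    by (simp only: mult_ac)
  ultimately have "x * y = (c powr (1 / \<theta>) * x) * (c powr (-1 / \<theta>) * y)"
    by simp
  also have "\<dots> \<le> (c powr (1 / \<theta>) * x) powr \<theta> / \<theta> + (c powr (-1 / \<theta>) * y) powr \<theta>' / \<theta>'"
    using \<theta> xy by (intro Youngs_inequality) auto
  also have "(c powr (1 / \<theta>) * x) powr \<theta> = c * x powr \<theta>"
    using c \<theta> xy by (simp add: powr_mult powr_powr)
  also have "(c powr (-1 / \<theta>) * y) powr \<theta>' = c powr (-\<theta>' / \<theta>) * y powr \<theta>'"
    using c xy by (simp add: powr_mult powr_powr)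
  also have "c * x powr \<theta> / \<theta> = \<epsilon> * x powr \<theta>"
    using \<theta> by (simp add: c_def)
  finally show ?thesis by (simp add: c_def)
qed

lemma young_split:
  fixes \<beta> p \<delta> m K \<epsilon> :: real
  assumes \<beta>: "\<beta> > 0" and \<delta>: "\<delta> \<ge> 1" and p: "p \<ge> 2" and K: "K \<ge> 0" and \<epsilon>: "\<epsilon> > 0"
  defines "q \<equiv> 2 * \<beta> + p - 1 + \<delta>"
  obtains C where "C > 0"
    "\<And>W G U P B. 0 < W \<Longrightarrow> 0 < G \<Longrightarrow> 1 / G \<le> m \<Longrightarrow> 0 < U \<Longrightarrow> 0 \<le> P \<Longrightarrow> P \<le> 1 \<Longrightarrow> 0 \<le> B \<Longrightarrow>
       W * K * (U powr (-2 * \<beta>) * P powr (q - p) * B powr p)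
       \<le> \<epsilon> * (G * (P / U) powr q) + C * (W powr theta_a' \<beta> p \<delta> * B powr (p * theta_a' \<beta> p \<delta>))"
proof -
  define \<theta> \<theta>' where "\<theta> = q / (2 * \<beta>)" and "\<theta>' = theta_a' \<beta> p \<delta>"
  have q_pos: "q > 0" "p - 1 + \<delta> > 0" using \<beta> \<delta> p by (auto simp: q_def)
  have \<theta>': "\<theta>' = q / (p - 1 + \<delta>)" by (simp add: \<theta>'_def theta_a'_def q_def)
  have \<theta>: "\<theta> > 1" "\<theta>' > 1" "1 / \<theta> + 1 / \<theta>' = 1"
    using \<beta> q_pos unfolding \<theta>' \<theta>_def by (simp_all add: field_simps) (simp_all add: q_def algebra_simps)
  define C0 where "C0 = (\<epsilon> * \<theta>) powr (-\<theta>' / \<theta>) * m powr (\<theta>' / \<theta>) * K powr \<theta>' / \<theta>'"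
  have "C0 \<ge> 0" using \<theta> by (simp add: C0_def)
  have "W * K * (U powr (-2 * \<beta>) * P powr (q - p) * B powr p)
      \<le> \<epsilon> * (G * (P / U) powr q) + (C0 + 1) * (W powr \<theta>' * B powr (p * \<theta>'))"
    if W: "0 < W" and G: "0 < G" "1 / G \<le> m" and U: "0 < U" and P: "0 \<le> P" "P \<le> 1" and B: "0 \<le> B"
    for W G U P B
  proof -
    define x where "x = G powr (1 / \<theta>) * U powr (-2 * \<beta>) * P powr (q - p)"
    define y where "y = G powr (-1 / \<theta>) * K * W * B powr p"
    have "G powr (1 / \<theta>) * G powr (-1 / \<theta>) = 1"
      using G by (simp flip: powr_add)
    moreover have "x * y = (G powr (1 / \<theta>) * G powr (-1 / \<theta>)) * (W * K * (U powr (-2 * \<beta>) * P powr (q - p) * B powr p))"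
      unfolding x_def y_def by (simp only: mult_ac)
    ultimately have "W * K * (U powr (-2 * \<beta>) * P powr (q - p) * B powr p) = x * y"
      by simp
    also have "\<dots> \<le> \<epsilon> * x powr \<theta> + (\<epsilon> * \<theta>) powr (-\<theta>' / \<theta>) * y powr \<theta>' / \<theta>'"
      using \<theta> \<epsilon> G K W by (intro Youngs_inequality_weighted) (auto simp: x_def y_def)
    also have "x powr \<theta> \<le> G * (P / U) powr q"
    proof -
      have "q \<le> (q - p) * \<theta>"
        using \<beta> \<delta> q_pos mult_right_mono[of "2 * \<beta>" "q - p" q] by (simp add: \<theta>_def q_def field_simps)
      then have "P powr ((q - p) * \<theta>) \<le> P powr q" using P by (intro powr_mono') auto
      moreover have "x powr \<theta> = G * U powr (-q) * P powr ((q - p) * \<theta>)"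
        using G U P \<theta> \<beta> by (simp add: x_def powr_mult powr_powr \<theta>_def)
      moreover have "(P / U) powr q = P powr q * U powr (-q)"
        using U P by (subst powr_divide) (auto simp: powr_minus divide_inverse)
      ultimately show ?thesis using G U by (simp add: mult_left_mono mult_ac)
    qed
    also have "y powr \<theta>' \<le> m powr (\<theta>' / \<theta>) * K powr \<theta>' * (W powr \<theta>' * B powr (p * \<theta>'))"
    proof -
      have "y powr \<theta>' = (1 / G) powr (\<theta>' / \<theta>) * K powr \<theta>' * (W powr \<theta>' * B powr (p * \<theta>'))"
        using G K W B by (simp add: y_def powr_mult powr_powr powr_divide powr_minus_divide mult_ac)
      moreover have "(1 / G) powr (\<theta>' / \<theta>) \<le> m powr (\<theta>' / \<theta>)"
        using G \<theta> by (intro powr_mono2) auto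
      ultimately show ?thesis by (simp add: mult_right_mono)
    qed
    finally have "W * K * (U powr (-2 * \<beta>) * P powr (q - p) * B powr p)
        \<le> \<epsilon> * (G * (P / U) powr q) + C0 * (W powr \<theta>' * B powr (p * \<theta>'))"
      using \<epsilon> \<theta> by (auto simp: C0_def divide_right_mono mult_left_mono mult_right_mono mult_ac)
    moreover have "0 \<le> W powr \<theta>' * B powr (p * \<theta>')" by simp
    ultimately show ?thesis unfolding distrib_right mult_1_left by linarith
  qed
  moreover have "C0 + 1 > 0" using \<open>C0 \<ge> 0\<close> by simp
  ultimately show ?thesis using that unfolding \<theta>'_def by blast
qed

lemma class_Pa_delta_ge_1: "class_Pa \<delta> p \<Longrightarrow> \<delta> \<ge> 1"
proof -
  have "(p - 1)\<^sup>2 / 4 \<ge> 1" if "p > 3" for p :: real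
    using power_mono[of 2 "p - 1" 2] that by simp
  then show "class_Pa \<delta> p \<Longrightarrow> \<delta> \<ge> 1" unfolding class_Pa_def by fastforce
qed

lemma stability_gap_p_eq_2:
  fixes \<delta> \<beta> :: real
  assumes "0 < \<delta>" "0 < \<beta>" "\<beta> < \<delta> + sqrt (\<delta>\<^sup>2 + \<delta>)"
  shows "\<beta>\<^sup>2 < \<delta> * (2 * \<beta> + 1)"
proof -
  define s where "s = sqrt (\<delta>\<^sup>2 + \<delta>)"
  have "s\<^sup>2 = \<delta>\<^sup>2 + \<delta>" "\<delta> \<le> s" using assms(1) by (auto simp: s_def intro: real_le_rsqrt)
  moreover have "\<bar>\<beta> - \<delta>\<bar> < s" using assms \<open>\<delta> \<le> s\<close> by (auto simp: s_def)
  then have "\<bar>\<beta> - \<delta>\<bar>\<^sup>2 < s\<^sup>2" by (intro power_strict_mono) auto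
  ultimately show ?thesis by (simp add: power2_eq_square algebra_simps)
qed

text \<open>For p > 2 the gap f x = \<delta>(2x + p - 1) - (p - 1)(x + (p - 2)/2)^2 is a concave quadratic that is
  positive at both ends 0 and s_p of the admissible range of \<beta>.\<close>

lemma stability_gap_p_gt_2:
  fixes p \<delta> \<beta> :: real
  assumes p: "p > 2" and cl: "class_Pa \<delta> p" and \<beta>: "0 < \<beta>" "\<beta> < 2 * \<delta> / (p - 1) - (p - 1) / 2"
  shows "(p - 1) * (\<beta> + (p - 2) / 2)\<^sup>2 < \<delta> * (2 * \<beta> + p - 1)"
proof -
  define S where "S = 2 * \<delta> / (p - 1) - (p - 1) / 2"
  define f where "f x = \<delta> * (2 * x + p - 1) - (p - 1) * (x + (p - 2) / 2)\<^sup>2" for x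
  have \<delta>: "\<delta> \<ge> 1" using class_Pa_delta_ge_1[OF cl] .
  have \<delta>_large: "\<delta> > (p - 1)\<^sup>2 / 4" if "p > 3"
    using cl that unfolding class_Pa_def by auto
  have "\<delta> > (p - 2)\<^sup>2 / 4"
  proof (cases "p \<le> 3")
    case True
    then show ?thesis using power_mono[of "p - 2" 1 2] p \<delta> by simp
  next
    case False
    have "(p - 2)\<^sup>2 \<le> (p - 1)\<^sup>2" using p by (intro power_mono) auto
    moreover have "\<delta> > (p - 1)\<^sup>2 / 4" using \<delta>_large False by simp
    ultimately show ?thesis by linarith
  qed
  moreover have "f 0 = (p - 1) * (\<delta> - (p - 2)\<^sup>2 / 4)"
    by (simp add: f_def power2_eq_square field_simps)
  ultimately have "f 0 > 0" using p by simp
  have "2 * \<delta> > (p - 1) / 4"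
  proof (cases "p \<le> 3")
    case False
    have "(p - 1) * 1 \<le> (p - 1) * (p - 1)" using False by (intro mult_left_mono) auto
    moreover have "\<delta> > (p - 1) * (p - 1) / 4" using \<delta>_large False by (simp add: power2_eq_square)
    ultimately show ?thesis using \<delta> by linarith
  qed (use \<delta> in simp)
  moreover have "f S = 2 * \<delta> - (p - 1) / 4"
  proof -
    define r where "r = p - 1"
    have "r > 0" using p by (simp add: r_def)
    have "S + (p - 2) / 2 = 2 * \<delta> / r - 1 / 2" "2 * S + p - 1 = 4 * \<delta> / r"
      using \<open>r > 0\<close> unfolding S_def r_def by (simp_all add: field_simps)
    then have "f S = \<delta> * (4 * \<delta> / r) - r * (2 * \<delta> / r - 1 / 2)\<^sup>2"
      unfolding f_def by (simp flip: r_def)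
    also have "\<dots> = 2 * \<delta> - r / 4"
      using \<open>r > 0\<close> by (simp add: power2_eq_square field_simps)
    finally show ?thesis by (simp add: r_def)
  qed
  ultimately have "f S > 0" by simp
  have "S * f \<beta> = (S - \<beta>) * f 0 + \<beta> * f S + (p - 1) * \<beta> * (S - \<beta>) * S"
    by (simp add: f_def power2_eq_square field_simps)
  moreover have "\<beta> < S" using \<beta> by (simp add: S_def)
  then have "(S - \<beta>) * f 0 > 0" "\<beta> * f S > 0" "(p - 1) * \<beta> * (S - \<beta>) * S > 0"
    using \<open>f 0 > 0\<close> \<open>f S > 0\<close> p \<beta> by (auto intro!: mult_pos_pos)
  ultimately have "S * f \<beta> > 0" by linarith
  moreover have "S > 0" using \<beta> \<open>\<beta> < S\<close> by simp
  ultimately show ?thesis by (simp add: f_def zero_less_mult_iff)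
qed

lemma class_Pa_stability_gap:
  fixes p \<delta> \<beta> :: real
  assumes "2 \<le> p" "0 < \<delta>" "class_Pa \<delta> p" "0 < \<beta>" "\<beta> < s_p p \<delta>"
  shows "(p - 1) * (\<beta> + (p - 2) / 2)\<^sup>2 < \<delta> * (2 * \<beta> + p - 1)"
proof (cases "p = 2")
  case True
  then show ?thesis using stability_gap_p_eq_2[of \<delta> \<beta>] assms by (simp add: s_p_def add.commute)
next
  case False
  then show ?thesis using stability_gap_p_gt_2[of p \<delta> \<beta>] assms by (simp add: s_p_def)
qed

lemma coercivity_parameter:
  fixes p \<alpha> \<delta> :: real
  assumes "(p - 1) * \<alpha>\<^sup>2 < \<delta> * (2 * \<alpha> + 1)" "2 * \<alpha> + 1 > 0"
  obtains t where "t < \<delta>" "t * (2 * \<alpha> + 1) - (p - 1) * \<alpha>\<^sup>2 > 0"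
proof -
  define c0 where "c0 = (p - 1) * \<alpha>\<^sup>2 / (2 * \<alpha> + 1)"
  have "c0 < \<delta>" using assms by (simp add: c0_def pos_divide_less_eq mult.commute)
  have "(p - 1) * \<alpha>\<^sup>2 = (2 * \<alpha> + 1) * c0" using assms(2) by (simp add: c0_def)
  then have "(c0 + \<delta>) / 2 * (2 * \<alpha> + 1) - (p - 1) * \<alpha>\<^sup>2 = (2 * \<alpha> + 1) * ((\<delta> - c0) / 2)"
    by (simp add: algebra_simps)
  also have "\<dots> > 0" using assms(2) \<open>c0 < \<delta>\<close> by simp
  finally show ?thesis using \<open>c0 < \<delta>\<close> by (intro that[of "(c0 + \<delta>) / 2"]) simp_all
qed

lemma caccioppoli_pointwise:
  fixes p \<delta> \<beta> m :: real
  assumes p: "p \<ge> 2" and \<delta>: "\<delta> \<ge> 1" and \<beta>: "\<beta> > 0"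
    and gap: "(p - 1) * (\<beta> + (p - 2) / 2)\<^sup>2 < \<delta> * (2 * \<beta> + p - 1)"
  defines "\<alpha> \<equiv> \<beta> + (p - 2) / 2" and "k \<equiv> (2 * \<beta> + p - 1 + \<delta>) / 2"
  obtains t \<epsilon> C where "\<epsilon> > 0" "C > 0"
    "\<And>(a :: 'v::real_inner) b \<gamma> W G U P. \<delta> < \<gamma> \<Longrightarrow> 0 < W \<Longrightarrow> 0 < G \<Longrightarrow> 1 / G \<le> m \<Longrightarrow>
       0 < U \<Longrightarrow> 0 \<le> P \<Longrightarrow> P \<le> 1 \<Longrightarrow>
       stability_density p \<delta> \<gamma> W G U a (singular_cutoff \<alpha> k U P) (singular_cutoff_grad \<alpha> k U P a b)
       + t * weak_density p \<delta> \<gamma> W G U a (singular_cutoff (2 * \<alpha> + 1) (2 * k) U P)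
                                         (singular_cutoff_grad (2 * \<alpha> + 1) (2 * k) U P a b)
       \<le> - \<epsilon> * (G * (P / U) powr (2 * \<beta> + p - 1 + \<delta>))
         + C * (W powr theta_a' \<beta> p \<delta> * norm b powr (p * theta_a' \<beta> p \<delta>))"
proof -
  define q where "q = 2 * \<beta> + p - 1 + \<delta>"
  have k_q: "k = q / 2" "k > 1" using p \<delta> \<beta> by (simp_all add: k_def q_def)
  have \<alpha>: "2 * \<alpha> + 1 = 2 * \<beta> + p - 1" "2 * \<alpha> + 1 > 0" using p \<beta> by (simp_all add: \<alpha>_def field_simps)
  have "(p - 1) * \<alpha>\<^sup>2 < \<delta> * (2 * \<alpha> + 1)"
    unfolding \<alpha>(1) using gap[folded \<alpha>_def] .
  then obtain t where "t < \<delta>" and coercive: "t * (2 * \<alpha> + 1) - (p - 1) * \<alpha>\<^sup>2 > 0"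
    using coercivity_parameter \<alpha>(2) by blast
  obtain K where K: "K \<ge> 0" and gradient: "\<And>(a :: 'v) b U P W. 0 < U \<Longrightarrow> 0 \<le> P \<Longrightarrow> 0 \<le> W \<Longrightarrow>
       (p - 1) * (W * pw (norm a) (p - 2) * (norm (singular_cutoff_grad \<alpha> k U P a b))\<^sup>2)
       + t * (W * pw (norm a) (p - 2) * (a \<bullet> singular_cutoff_grad (2 * \<alpha> + 1) (2 * k) U P a b))
       \<le> W * K * (U powr (-2 * \<beta>) * P powr (q - p) * norm b powr p)"
    using singular_cutoff_gradient_bound[OF p \<alpha>_def[THEN meta_eq_to_obj_eq] k_q coercive] by blast
  define \<epsilon> where "\<epsilon> = (\<delta> - t) / 2"
  have \<epsilon>: "\<epsilon> > 0" using \<open>t < \<delta>\<close> by (simp add: \<epsilon>_def)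
  obtain C where C: "C > 0" and young: "\<And>W G U P B. 0 < W \<Longrightarrow> 0 < G \<Longrightarrow> 1 / G \<le> m \<Longrightarrow>
       0 < U \<Longrightarrow> 0 \<le> P \<Longrightarrow> P \<le> 1 \<Longrightarrow> 0 \<le> B \<Longrightarrow>
       W * K * (U powr (-2 * \<beta>) * P powr (q - p) * B powr p)
       \<le> \<epsilon> * (G * (P / U) powr q) + C * (W powr theta_a' \<beta> p \<delta> * B powr (p * theta_a' \<beta> p \<delta>))"
    using young_split[OF \<beta> \<delta> p K \<epsilon>, of m] unfolding q_def by blast
  show ?thesis
  proof (rule that[OF \<epsilon> C])
    fix a b :: 'v and \<gamma> W G U P :: real
    assume \<gamma>: "\<delta> < \<gamma>" and W: "0 < W" and G: "0 < G" "1 / G \<le> m"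
      and U: "0 < U" and P: "0 \<le> P" "P \<le> 1"
    define D\<phi> D\<zeta> where "D\<phi> = singular_cutoff_grad \<alpha> k U P a b"
      and "D\<zeta> = singular_cutoff_grad (2 * \<alpha> + 1) (2 * k) U P a b"
    define S1 S2 S3 where "S1 = W * pw (norm a) (p - 2) * (norm D\<phi>)\<^sup>2"
      and "S2 = (if a = 0 then 0 else W * norm a powr (p - 4) * (a \<bullet> D\<phi>)\<^sup>2)"
      and "S3 = G * (\<delta> * U powr (-\<delta> - 1) + \<gamma> * U powr (-\<gamma> - 1)) * (singular_cutoff \<alpha> k U P)\<^sup>2"
    define S4 S5 where "S4 = W * pw (norm a) (p - 2) * (a \<bullet> D\<zeta>)"
      and "S5 = G * (- (U powr (-\<delta>)) - U powr (-\<gamma>)) * singular_cutoff (2 * \<alpha> + 1) (2 * k) U P"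
    define A F where "A = G * (P / U) powr q"
      and "F = W powr theta_a' \<beta> p \<delta> * norm b powr (p * theta_a' \<beta> p \<delta>)"
    have "(p - 2) * S2 \<le> (p - 2) * S1"
      using inner_square_le_pw[OF p, of a D\<phi>] p W
      by (auto simp: S1_def S2_def pw_def mult.assoc intro!: mult_left_mono)
    moreover have "- S3 - t * S5 \<le> - (\<delta> - t) * A"
      unfolding S3_def S5_def A_def using \<gamma> \<open>t < \<delta>\<close> G U P
      by (intro nonlinearity_terms_bound) (auto simp: q_def \<alpha>_def k_def field_simps)
    moreover have "(p - 1) * S1 + t * S4 \<le> W * K * (U powr (-2 * \<beta>) * P powr (q - p) * norm b powr p)"
      unfolding S1_def S4_def D\<phi>_def D\<zeta>_def using W by (intro gradient[OF U P(1)]) simp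
    moreover have "W * K * (U powr (-2 * \<beta>) * P powr (q - p) * norm b powr p) \<le> \<epsilon> * A + C * F"
      unfolding A_def F_def by (intro young[OF W G U P]) simp
    moreover have "(p - 1) * S1 = S1 + (p - 2) * S1" "t * (S4 - S5) = t * S4 - t * S5"
      "- (\<delta> - t) * A = - 2 * (\<epsilon> * A)" "- \<epsilon> * A = - (\<epsilon> * A)"
      by (simp_all add: \<epsilon>_def algebra_simps)
    ultimately have "S1 + (p - 2) * S2 - S3 + t * (S4 - S5) \<le> - \<epsilon> * A + C * F"
      by linarith
    then show "stability_density p \<delta> \<gamma> W G U a (singular_cutoff \<alpha> k U P) (singular_cutoff_grad \<alpha> k U P a b)
       + t * weak_density p \<delta> \<gamma> W G U a (singular_cutoff (2 * \<alpha> + 1) (2 * k) U P)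
                                         (singular_cutoff_grad (2 * \<alpha> + 1) (2 * k) U P a b)
       \<le> - \<epsilon> * (G * (P / U) powr (2 * \<beta> + p - 1 + \<delta>))
         + C * (W powr theta_a' \<beta> p \<delta> * norm b powr (p * theta_a' \<beta> p \<delta>))"
      unfolding stability_density_def weak_density_def S1_def S2_def S3_def S4_def S5_def
        D\<phi>_def D\<zeta>_def A_def F_def q_def .
  qed
qed

lemma nn_integral_le_by_absorption:
  fixes E A F :: "'a \<Rightarrow> real" and \<epsilon> C :: real
  assumes E: "integrable M E" "0 \<le> integral\<^sup>L M E"
    and A: "integrable M A" "AE x in M. 0 \<le> A x"
    and F: "F \<in> borel_measurable M" "\<And>x. 0 \<le> F x"
    and \<epsilon>C: "\<epsilon> > 0" "C > 0"
    and bound: "AE x in M. E x \<le> - \<epsilon> * A x + C * F x"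
  shows "(\<integral>\<^sup>+x. A x \<partial>M) \<le> ennreal (C / \<epsilon>) * (\<integral>\<^sup>+x. F x \<partial>M)"
proof (cases "(\<integral>\<^sup>+x. F x \<partial>M) = \<infinity>")
  case True
  then show ?thesis using \<epsilon>C by (simp add: ennreal_mult_top)
next
  case False
  then obtain r where r: "(\<integral>\<^sup>+x. F x \<partial>M) = ennreal r"
    by (cases "\<integral>\<^sup>+x. F x \<partial>M") auto
  have iF: "integrable M F"
    using F by (intro integrableI_nn_integral_finite[OF _ _ r]) auto
  have "integral\<^sup>L M E \<le> integral\<^sup>L M (\<lambda>x. - \<epsilon> * A x + C * F x)"
    using E(1) A(1) iF bound by (intro integral_mono_AE) auto
  then have "\<epsilon> * integral\<^sup>L M A \<le> C * integral\<^sup>L M F"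
    using E(2) A(1) iF by simp
  then have "integral\<^sup>L M A \<le> C / \<epsilon> * integral\<^sup>L M F"
    using \<epsilon>C by (simp add: field_simps)
  moreover have "(\<integral>\<^sup>+x. A x \<partial>M) = ennreal (integral\<^sup>L M A)"
    using A by (rule nn_integral_eq_integral)
  moreover have "(\<integral>\<^sup>+x. F x \<partial>M) = ennreal (integral\<^sup>L M F)"
    using iF F by (intro nn_integral_eq_integral) auto
  ultimately show ?thesis
    using \<epsilon>C by (simp add: ennreal_mult'[symmetric] ennreal_leI)
qed

lemma integrable_quotient_powr:
  fixes g u \<psi> :: "real^'n \<Rightarrow> real" and Du D\<psi> :: "real^'n \<Rightarrow> real^'n"
  assumes g: "locally_integrable g" and u: "C1_with_grad u Du" "\<And>x. 0 < u x"
    and \<psi>: "C1_with_grad \<psi> D\<psi>" "compact_support \<psi>" "\<And>x. 0 \<le> \<psi> x" and q: "q > 0"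
  shows "integrable lborel (\<lambda>x. g x * (\<psi> x / u x) powr q)"
proof (rule locally_integrable_mult_integrable[OF g])
  show "continuous_on UNIV (\<lambda>x. (\<psi> x / u x) powr q)"
    using C1_with_grad_continuous[OF u(1)] C1_with_grad_continuous[OF \<psi>(1)] u(2) \<psi>(3) q
    by (intro continuous_on_powr') (auto intro!: continuous_intros divide_nonneg_pos simp: less_imp_neq[symmetric])
  show "compact (closure {x. \<psi> x \<noteq> 0})" using \<psi>(2) unfolding compact_support_def .
  show "(\<psi> x / u x) powr q = 0" if "x \<notin> closure {x. \<psi> x \<noteq> 0}" for x
    using that closure_subset[of "{x. \<psi> x \<noteq> 0}"] by auto
qed

lemma stable_weak_solution_combination:
  fixes w g u \<phi> \<zeta> :: "real^'n \<Rightarrow> real" and Du D\<phi> D\<zeta> :: "real^'n \<Rightarrow> real^'n" and t :: real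
  assumes "stable_sol p \<delta> \<gamma> w g u Du" "weak_solution p \<delta> \<gamma> w g u Du"
    and "locally_integrable w" "locally_integrable g" "C1_with_grad u Du" "\<And>x. 0 < u x" "2 \<le> p"
    and "C1_with_grad \<phi> D\<phi>" "compact_support \<phi>" "C1_with_grad \<zeta> D\<zeta>" "compact_support \<zeta>"
  defines "E \<equiv> \<lambda>x. stability_density p \<delta> \<gamma> (w x) (g x) (u x) (Du x) (\<phi> x) (D\<phi> x)
                   + t * weak_density p \<delta> \<gamma> (w x) (g x) (u x) (Du x) (\<zeta> x) (D\<zeta> x)"
  shows "integrable lborel E" and "0 \<le> integral\<^sup>L lborel E"
  using stable_sol_density_integral_nonneg[OF assms(1,3-9)]
    weak_solution_density_integral_eq_0[OF assms(2-7,10,11)]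
  unfolding E_def by simp_all

lemma caccioppoli_estimate:
  fixes p \<delta> \<beta> m :: real
  assumes p: "2 \<le> p" and \<delta>: "1 \<le> \<delta>" and \<beta>: "0 < \<beta>"
    and gap: "(p - 1) * (\<beta> + (p - 2) / 2)\<^sup>2 < \<delta> * (2 * \<beta> + p - 1)"
  obtains c where "c > 0"
    "\<And>\<gamma> (w :: real^'n \<Rightarrow> real) g u Du \<psi> D\<psi>. \<delta> < \<gamma> \<Longrightarrow>
       locally_integrable w \<Longrightarrow> locally_integrable g \<Longrightarrow>
       AE x in lborel. 0 < w x \<Longrightarrow> AE x in lborel. 0 < g x \<Longrightarrow> AE x in lborel. 1 / g x \<le> m \<Longrightarrow>
       C1_with_grad u Du \<Longrightarrow> (\<And>x. 0 < u x) \<Longrightarrow>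
       weak_solution p \<delta> \<gamma> w g u Du \<Longrightarrow> stable_sol p \<delta> \<gamma> w g u Du \<Longrightarrow>
       C1_with_grad \<psi> D\<psi> \<Longrightarrow> compact_support \<psi> \<Longrightarrow> (\<And>x. 0 \<le> \<psi> x \<and> \<psi> x \<le> 1) \<Longrightarrow>
       (\<integral>\<^sup>+x. ennreal (g x * (\<psi> x / u x) powr (2 * \<beta> + p - 1 + \<delta>)) \<partial>lborel)
         \<le> ennreal c * (\<integral>\<^sup>+x. ennreal (w x powr theta_a' \<beta> p \<delta>
                           * norm (D\<psi> x) powr (p * theta_a' \<beta> p \<delta>)) \<partial>lborel)"
proof -
  define \<alpha> k where "\<alpha> = \<beta> + (p - 2) / 2" and "k = (2 * \<beta> + p - 1 + \<delta>) / 2"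
  obtain t \<epsilon> C where \<epsilon>C: "\<epsilon> > 0" "C > 0" and pointwise:
    "\<And>(a :: real^'n) b \<gamma> W G U P. \<delta> < \<gamma> \<Longrightarrow> 0 < W \<Longrightarrow> 0 < G \<Longrightarrow> 1 / G \<le> m \<Longrightarrow>
       0 < U \<Longrightarrow> 0 \<le> P \<Longrightarrow> P \<le> 1 \<Longrightarrow>
       stability_density p \<delta> \<gamma> W G U a (singular_cutoff \<alpha> k U P) (singular_cutoff_grad \<alpha> k U P a b)
       + t * weak_density p \<delta> \<gamma> W G U a (singular_cutoff (2 * \<alpha> + 1) (2 * k) U P)
                                         (singular_cutoff_grad (2 * \<alpha> + 1) (2 * k) U P a b)
       \<le> - \<epsilon> * (G * (P / U) powr (2 * \<beta> + p - 1 + \<delta>))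
         + C * (W powr theta_a' \<beta> p \<delta> * norm b powr (p * theta_a' \<beta> p \<delta>))"
    by (rule caccioppoli_pointwise[OF p \<delta> \<beta> gap, of m, folded \<alpha>_def k_def]) (rule that)
  show ?thesis
  proof (rule that[of "C / \<epsilon>"])
    show "C / \<epsilon> > 0" using \<epsilon>C by simp
    fix \<gamma> and w g u \<psi> :: "real^'n \<Rightarrow> real" and Du D\<psi> :: "real^'n \<Rightarrow> real^'n"
    assume \<gamma>: "\<delta> < \<gamma>" and w: "locally_integrable w" "AE x in lborel. 0 < w x"
      and g: "locally_integrable g" "AE x in lborel. 0 < g x" "AE x in lborel. 1 / g x \<le> m"
      and u: "C1_with_grad u Du" "\<And>x. 0 < u x"
      and solution: "weak_solution p \<delta> \<gamma> w g u Du" "stable_sol p \<delta> \<gamma> w g u Du"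
      and \<psi>: "C1_with_grad \<psi> D\<psi>" "compact_support \<psi>" "\<And>x. 0 \<le> \<psi> x \<and> \<psi> x \<le> 1"
    have "k > 1" "2 * k > 1" using p \<delta> \<beta> by (simp_all add: k_def)
    have "\<And>x. 0 \<le> \<psi> x" using \<psi>(3) by simp
    note cutoff = C1_with_grad_singular_cutoff[OF u \<psi>(1) this] compact_support_singular_cutoff[OF \<psi>(2)]
    note combination = stable_weak_solution_combination[OF solution(2,1) w(1) g(1) u p
        cutoff(1)[OF \<open>k > 1\<close>, of \<alpha>] cutoff(2) cutoff(1)[OF \<open>2 * k > 1\<close>, of "2 * \<alpha> + 1"] cutoff(2), of t]
    show "(\<integral>\<^sup>+x. ennreal (g x * (\<psi> x / u x) powr (2 * \<beta> + p - 1 + \<delta>)) \<partial>lborel)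
      \<le> ennreal (C / \<epsilon>) * (\<integral>\<^sup>+x. ennreal (w x powr theta_a' \<beta> p \<delta>
                           * norm (D\<psi> x) powr (p * theta_a' \<beta> p \<delta>)) \<partial>lborel)"
    proof (rule nn_integral_le_by_absorption[OF combination _ _ _ _ \<epsilon>C])
      show "integrable lborel (\<lambda>x. g x * (\<psi> x / u x) powr (2 * \<beta> + p - 1 + \<delta>))"
        using p \<delta> \<beta> \<psi> by (intro integrable_quotient_powr[OF g(1) u \<psi>(1,2)]) auto
      show "AE x in lborel. 0 \<le> g x * (\<psi> x / u x) powr (2 * \<beta> + p - 1 + \<delta>)"
        using g(2) by eventually_elim simp
      have "D\<psi> \<in> borel_measurable lborel"
        using \<psi>(1) borel_measurable_continuous_onI unfolding C1_with_grad_def by auto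
      then show "(\<lambda>x. w x powr theta_a' \<beta> p \<delta> * norm (D\<psi> x) powr (p * theta_a' \<beta> p \<delta>))
          \<in> borel_measurable lborel"
        using locally_integrable_borel_measurable[OF w(1)] by measurable
      show "AE x in lborel. stability_density p \<delta> \<gamma> (w x) (g x) (u x) (Du x)
            (singular_cutoff \<alpha> k (u x) (\<psi> x)) (singular_cutoff_grad \<alpha> k (u x) (\<psi> x) (Du x) (D\<psi> x))
          + t * weak_density p \<delta> \<gamma> (w x) (g x) (u x) (Du x)
            (singular_cutoff (2 * \<alpha> + 1) (2 * k) (u x) (\<psi> x))
            (singular_cutoff_grad (2 * \<alpha> + 1) (2 * k) (u x) (\<psi> x) (Du x) (D\<psi> x))
          \<le> - \<epsilon> * (g x * (\<psi> x / u x) powr (2 * \<beta> + p - 1 + \<delta>))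
            + C * (w x powr theta_a' \<beta> p \<delta> * norm (D\<psi> x) powr (p * theta_a' \<beta> p \<delta>))"
        using w(2) g(2,3) by eventually_elim (intro pointwise \<gamma> u(2) \<psi>(3), simp_all add: \<psi>(3))
    qed simp
  qed
qed

lemma AE_le_of_esssup_eq:
  fixes f :: "'a \<Rightarrow> real"
  assumes "esssup M (\<lambda>x. ereal (f x)) = ereal m"
  shows "AE x in M. f x \<le> m"
  using esssup_AE[of "\<lambda>x. ereal (f x)" M] assms by simp

theorem theorem3p1:
  fixes \<beta> p \<delta> m :: real
  assumes "2 \<le> p" and "0 < \<delta>" and "class_Pa \<delta> p"
    and "0 < \<beta>" and "\<beta> < s_p p \<delta>"
  shows "\<exists>c>0. \<forall>\<gamma> (w :: real^'n \<Rightarrow> real) g u Du \<psi> D\<psi>.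
    \<delta> < \<gamma> \<and>
    locally_integrable w \<and> locally_integrable g \<and>
    (AE x in lborel. w x > 0) \<and> (AE x in lborel. g x > 0) \<and>
    esssup lborel (\<lambda>x. ereal (1 / g x)) = ereal m \<and>
    C1_with_grad u Du \<and> (\<forall>x. 0 < u x \<and> u x \<le> 1) \<and>
    weak_solution p \<delta> \<gamma> w g u Du \<and> stable_sol p \<delta> \<gamma> w g u Du \<and>
    C1_with_grad \<psi> D\<psi> \<and> compact_support \<psi> \<and> (\<forall>x. 0 \<le> \<psi> x \<and> \<psi> x \<le> 1)
    \<longrightarrow>
    (\<integral>\<^sup>+x. ennreal (g x * (\<psi> x / u x) powr (2 * \<beta> + p - 1 + \<delta>)) \<partial>lborel)
      \<le> ennreal c * (\<integral>\<^sup>+x. ennreal (w x powr theta_a' \<beta> p \<delta>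
                         * norm (D\<psi> x) powr (p * theta_a' \<beta> p \<delta>)) \<partial>lborel)"
proof -
  have "1 \<le> \<delta>" using class_Pa_delta_ge_1[OF assms(3)] .
  note estimate = caccioppoli_estimate[OF assms(1) this assms(4) class_Pa_stability_gap[OF assms],
      where m = m and 'n = 'n]
  show ?thesis
  proof (rule estimate, goal_cases)
    case (1 c)
    then show ?case
      by (intro exI[of _ c]) (auto intro!: 1(2) AE_le_of_esssup_eq)
  qed
qed

end
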